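(* Assume the setting below ($2\overline{s}$-sparse flatness, in the form of the reconstruction maps $\alpha_I$). Let $\mathcal{I}\subseteq\{1,\dots,p\}$ with $|\mathcal{I}|>p-2\overline{s}$ be such that $\mathrm{Check}(\mathcal{I})$ returns UNSAT. Then there exists $\mathcal{I}_{temp}\subseteq\mathcal{I}$ with $|\mathcal{I}_{temp}|\le p-2\overline{s}+1$ such that $\mathrm{Check}(\mathcal{I}_{temp})$ also returns UNSAT.
   Context: Consider the discrete-time system $x^{(t+1)}=f(x^{(t)},u^{(t)})$, $y^{(t)}=h(x^{(t)})+a^{(t)}$, with state in $\mathcal{X}\subseteq\mathbb{R}^n$, input in $\mathbb{R}^m$, and $p$ scalar sensors $y_i=h_i(x)+a_i$, where $a^{(t)}$ is an arbitrary attack vector. Fix a window length $\tau$ and an input sequence $u$ over the window. For sensor $i$, $H_{u,i}:\mathcal{X}\to\mathbb{R}^\tau$ maps the window-initial state $z$ to $\big(h_i(z),h_i(f_{u^{(1)}}(z)),\dots,h_i(f_{u^{(\tau-1)}\cdots u^{(1)}}(z))\big)$ ($k$-fold compositions of $f(\cdot,u^{(j)})$), and $H_{u,I}=(H_{u,i})_{i\in I}$. $Y=(Y_1,\dots,Y_p)$, $Y_i\in\mathbb{R}^\tau$, are the collected (possibly attacked) measurements over the window, and $Y_I=(Y_i)_{i\in I}$. $\overline{s}\le p/2$ is the bound on attacked sensors. The system is assumed $2\overline{s}$-sparse flat: for every set $I$ of sensors with $|I|\ge p-2\overline{s}$, the outputs of the sensors in $I$ form a flat output, so that there is a reconstruction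 map $\alpha_I:\mathbb{R}^{\tau|I|}\to\mathcal{X}$ with $\alpha_I(H_{u,I}(z))=z$ for all $z\in\mathcal{X}$. For such $I$, the procedure $\mathrm{Check}(I)$ computes $x:=\alpha_I(Y_I)$ and returns SAT if $\|Y_I-H_{u,I}(x)\|=0$ and UNSAT otherwise. *)

theory Defs
  imports "HOL-Analysis.Analysis"
begin

text \<open>Window-initial state z, input sequence u (u k = u^(k), k = 1..tau-1).
  traj f u z k is the k-fold composition f_{u^(k)} o ... o f_{u^(1)} applied to z.\<close>
fun traj :: "('x \<Rightarrow> 'u \<Rightarrow> 'x) \<Rightarrow> (nat \<Rightarrow> 'u) \<Rightarrow> 'x \<Rightarrow> nat \<Rightarrow> 'x" where
  "traj f u z 0 = z"
| "traj f u z (Suc k) = f (traj f u z k) (u (Suc k))"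

text \<open>Vectors in R^tau are functions nat => real, only components k < tau are relevant.
  Window measurements of all sensors: nat => nat => real (sensor index, time index).\<close>
definition Hu :: "('x \<Rightarrow> 'u \<Rightarrow> 'x) \<Rightarrow> (nat \<Rightarrow> 'x \<Rightarrow> real) \<Rightarrow> (nat \<Rightarrow> 'u) \<Rightarrow> nat
                 \<Rightarrow> 'x \<Rightarrow> nat \<Rightarrow> nat \<Rightarrow> real" where
  "Hu f h u tau z i k = (if k < tau then h i (traj f u z k) else 0)"

definition restr :: "nat set \<Rightarrow> nat \<Rightarrow> (nat \<Rightarrow> nat \<Rightarrow> real) \<Rightarrow> nat \<Rightarrow> nat \<Rightarrow> real" where
  "restr I tau Y i k = (if i \<in> I \<and> k < tau then Y i k else 0)"

definition residual :: "('x \<Rightarrow> 'u \<Rightarrow> 'x) \<Rightarrow> (nat \<Rightarrow> 'x \<Rightarrow> real) \<Rightarrow> (nat \<Rightarrow> 'u) \<Rightarrow> nat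
     \<Rightarrow> nat set \<Rightarrow> (nat \<Rightarrow> nat \<Rightarrow> real) \<Rightarrow> 'x \<Rightarrow> real" where
  "residual f h u tau I Y x = sqrt (\<Sum>i\<in>I. \<Sum>k<tau. (Y i k - Hu f h u tau x i k)^2)"

definition check_sat :: "('x \<Rightarrow> 'u \<Rightarrow> 'x) \<Rightarrow> (nat \<Rightarrow> 'x \<Rightarrow> real) \<Rightarrow> (nat \<Rightarrow> 'u) \<Rightarrow> nat
     \<Rightarrow> (nat set \<Rightarrow> (nat \<Rightarrow> nat \<Rightarrow> real) \<Rightarrow> 'x) \<Rightarrow> nat set \<Rightarrow> (nat \<Rightarrow> nat \<Rightarrow> real) \<Rightarrow> bool" where
  "check_sat f h u tau \<alpha> I Y = (residual f h u tau I Y (\<alpha> I (restr I tau Y)) = 0)"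

text \<open>2s-sparse flatness via reconstruction maps alpha_I : R^{tau|I|} -> X.\<close>
definition sparse_flat :: "('x \<Rightarrow> 'u \<Rightarrow> 'x) \<Rightarrow> (nat \<Rightarrow> 'x \<Rightarrow> real) \<Rightarrow> (nat \<Rightarrow> 'u) \<Rightarrow> nat
     \<Rightarrow> 'x set \<Rightarrow> nat \<Rightarrow> nat \<Rightarrow> (nat set \<Rightarrow> (nat \<Rightarrow> nat \<Rightarrow> real) \<Rightarrow> 'x) \<Rightarrow> bool" where
  "sparse_flat f h u tau X p s \<alpha> =
     (\<forall>I. I \<subseteq> {1..p} \<and> card I \<ge> p - 2 * s \<longrightarrow>
        (\<forall>w. \<alpha> I w \<in> X) \<and> (\<forall>z\<in>X. \<alpha> I (restr I tau (Hu f h u tau z)) = z))"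

end

theory Submission
  imports Defs
begin

text \<open>Fix a set \<open>K \<subseteq> I\<close> of exactly \<open>p - 2s\<close> sensors and let \<open>x = \<alpha>\<^sub>K(Y\<^sub>K)\<close>.
  If every \<open>J \<subseteq> I\<close> with \<open>|J| = p - 2s + 1\<close> passed the check, then for each \<open>J \<supseteq> K\<close>
  the measurements on \<open>J\<close> would be exactly \<open>H\<^sub>J(x\<^sub>J)\<close> with \<open>x\<^sub>J \<in> X\<close>, so flatness of \<open>K\<close>
  forces \<open>x\<^sub>J = \<alpha>\<^sub>K(Y\<^sub>K) = x\<close>. Every sensor of \<open>I\<close> lies in such a \<open>J\<close>, hence \<open>Y\<^sub>I = H\<^sub>I(x)\<close>
  and \<open>Check(I)\<close> would succeed as well.\<close>

lemma check_sat_iff_matches: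
  assumes "finite J"
  shows "check_sat f h u tau \<alpha> J Y \<longleftrightarrow>
    (\<forall>i\<in>J. \<forall>k<tau. Y i k = Hu f h u tau (\<alpha> J (restr J tau Y)) i k)"
proof -
  let ?x = "\<alpha> J (restr J tau Y)"
  have "check_sat f h u tau \<alpha> J Y \<longleftrightarrow> (\<Sum>i\<in>J. \<Sum>k<tau. (Y i k - Hu f h u tau ?x i k)^2) = 0"
    unfolding check_sat_def residual_def by simp
  also have "\<dots> \<longleftrightarrow> (\<forall>i\<in>J. (\<Sum>k<tau. (Y i k - Hu f h u tau ?x i k)^2) = 0)"
    using assms by (intro sum_nonneg_eq_0_iff) (auto intro: sum_nonneg)
  also have "\<dots> \<longleftrightarrow> (\<forall>i\<in>J. \<forall>k<tau. Y i k = Hu f h u tau ?x i k)"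
    by (simp add: sum_nonneg_eq_0_iff) blast
  finally show ?thesis .
qed

lemma restr_cong:
  assumes "\<forall>i\<in>K. \<forall>k<tau. Y i k = Z i k"
  shows "restr K tau Y = restr K tau Z"
  using assms by (auto simp: restr_def fun_eq_iff)

lemma sparse_flat_reconstruct:
  assumes "sparse_flat f h u tau X p s \<alpha>" "J \<subseteq> {1..p}" "p - 2 * s \<le> card J"
    and "\<forall>i\<in>J. \<forall>k<tau. Y i k = Hu f h u tau x i k" "x \<in> X"
  shows "\<alpha> J (restr J tau Y) = x"
proof -
  have "\<alpha> J (restr J tau Y) = \<alpha> J (restr J tau (Hu f h u tau x))"
    using assms(4) by (metis restr_cong)
  also have "\<dots> = x"
    using assms(1-3,5) unfolding sparse_flat_def by blast
  finally show ?thesis .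
qed

lemma check_sat_reconstruct_subset:
  assumes flat: "sparse_flat f h u tau X p s \<alpha>"
    and "K \<subseteq> J" "J \<subseteq> {1..p}" "p - 2 * s \<le> card K"
    and sat: "check_sat f h u tau \<alpha> J Y"
  shows "\<alpha> K (restr K tau Y) = \<alpha> J (restr J tau Y)"
proof -
  have "finite J" using assms(3) finite_subset by blast
  then have "\<forall>i\<in>J. \<forall>k<tau. Y i k = Hu f h u tau (\<alpha> J (restr J tau Y)) i k"
    using sat check_sat_iff_matches by blast
  moreover have "card K \<le> card J" using \<open>finite J\<close> \<open>K \<subseteq> J\<close> card_mono by blast
  ultimately have "\<alpha> J (restr J tau Y) \<in> X"
    using flat assms(3,4) unfolding sparse_flat_def by auto
  with flat assms(2-4) \<open>\<forall>i\<in>J. _\<close> show ?thesis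
    by (intro sparse_flat_reconstruct) auto
qed

lemma exists_superset_card_Suc_containing:
  assumes "finite I" "K \<subset> I" "i \<in> I"
  shows "\<exists>J. K \<subseteq> J \<and> J \<subseteq> I \<and> i \<in> J \<and> card J = card K + 1"
proof -
  obtain j where j: "j \<in> I - K" "i \<in> K \<or> j = i"
    using assms(2,3) by blast
  have "finite K" using assms(1,2) finite_subset by blast
  then show ?thesis
    using j assms(2) by (intro exI[of _ "insert j K"]) auto
qed

theorem lemma1:
  fixes f :: "real^'n \<Rightarrow> real^'m \<Rightarrow> real^'n"
    and h :: "nat \<Rightarrow> real^'n \<Rightarrow> real"
    and u :: "nat \<Rightarrow> real^'m"
    and X :: "(real^'n) set"
    and \<alpha> :: "nat set \<Rightarrow> (nat \<Rightarrow> nat \<Rightarrow> real) \<Rightarrow> real^'n"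
    and Y :: "nat \<Rightarrow> nat \<Rightarrow> real"
    and p s tau :: nat
    and I :: "nat set"
  assumes "2 * s \<le> p"
    and "sparse_flat f h u tau X p s \<alpha>"
    and "I \<subseteq> {1..p}"
    and "card I > p - 2 * s"
    and "\<not> check_sat f h u tau \<alpha> I Y"
  shows "\<exists>Itemp \<subseteq> I. p - 2 * s \<le> card Itemp \<and> card Itemp \<le> p - 2 * s + 1 \<and> \<not> check_sat f h u tau \<alpha> Itemp Y"
proof (rule ccontr)
  assume all_sat: "\<not> ?thesis"
  have "finite I" using assms(3) finite_subset by blast
  obtain K where K: "K \<subseteq> I" "card K = p - 2 * s"
    using obtain_subset_with_card_n[of "p - 2 * s" I] assms(4) by (metis less_imp_le)
  with assms(4) have "K \<subset> I" by auto
  define x where "x = \<alpha> K (restr K tau Y)"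
  have matches: "\<forall>k<tau. Y i k = Hu f h u tau x i k" if "i \<in> I" for i
  proof -
    obtain J where J: "K \<subseteq> J" "J \<subseteq> I" "i \<in> J" "card J = card K + 1"
      using exists_superset_card_Suc_containing[OF \<open>finite I\<close> \<open>K \<subset> I\<close> \<open>i \<in> I\<close>] by blast
    have "finite J" using J(2) \<open>finite I\<close> finite_subset by blast
    have sat: "check_sat f h u tau \<alpha> J Y" using all_sat J(2,4) K(2) by auto
    have "x = \<alpha> J (restr J tau Y)"
      unfolding x_def using J(1,2) K(2) assms(2,3) sat
      by (intro check_sat_reconstruct_subset) auto
    with sat J(3) show ?thesis using check_sat_iff_matches[OF \<open>finite J\<close>] by blast
  qed
  moreover have "x \<in> X" using assms(2) K assms(3) unfolding x_def sparse_flat_def by auto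
  ultimately have "\<alpha> I (restr I tau Y) = x"
    using assms(2-4) by (intro sparse_flat_reconstruct) auto
  with matches have "check_sat f h u tau \<alpha> I Y"
    by (simp add: check_sat_iff_matches[OF \<open>finite I\<close>])
  with assms(5) show False ..
qed

end
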